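(* Let $n_\Gamma \le n$ be positive integers, let $H$ be a real symmetric $n\times n$ matrix, and let $R$ be a real $n_\Gamma\times n$ matrix with $RR^T = I_{n_\Gamma}$ (so that $R^TR$ is an orthogonal projection on $\mathbb{R}^n$). For $s_0>0$ define $$\widetilde{Y}(s_0) = R\,(s_0 I_n + iH)^{-1}R^T .$$ Then $\widetilde{Y}(s_0)$ is invertible, and the $n_\Gamma\times n_\Gamma$ matrix $$\bar{H}_{\Gamma,\Gamma} = (-i)\big(\widetilde{Y}(s_0)^{-1} - s_0 I_{n_\Gamma}\big)$$ is (complex) symmetric and its imaginary part $\operatorname{Im}\bar{H}_{\Gamma,\Gamma}$ (taken entrywise) is negative semidefinite; equivalently $\operatorname{Im}\bar{H}_{\Gamma,\Gamma} = -\operatorname{Re}\big(\widetilde{Y}(s_0)^{-1}-s_0 I_{n_\Gamma}\big)\le 0$.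
   Context: Here $H$ plays the role of the (discretized) Hamiltonian $H_{\mathrm{II},\mathrm{II}}$ restricted to an exterior region, $R$ is the restriction operator from the exterior region to a boundary layer $\Gamma$, and $\widetilde{Y}(s)$ is the Laplace transform of $Y(t)=Re^{-iHt}R^T$. The matrix $\bar H_{\Gamma,\Gamma}$ is the effective boundary Hamiltonian of the absorbing boundary condition $i\partial_t\delta\rho_{\Gamma,\Gamma} = [\bar H_{\Gamma,\Gamma},\delta\rho_{\Gamma,\Gamma}] + (\text{source terms})$, chosen so that $Z(t)=e^{-i\bar H_{\Gamma,\Gamma}t}$ satisfies $\widetilde Z(s_0)=\widetilde Y(s_0)$. For a complex matrix $M$, $\operatorname{Re}M$ and $\operatorname{Im}M$ denote the entrywise real and imaginary parts; "$\le 0$" means negative semidefinite. *)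

theory Defs
  imports "HOL-Analysis.Analysis"
begin

definition neg_semidef :: "real^'k^'k \<Rightarrow> bool" where
  "neg_semidef M \<longleftrightarrow> (\<forall>x::real^'k. x \<bullet> (M *v x) \<le> 0)"

end

theory Submission
  imports Defs
begin

text \<open>
  View \<open>\<complex>\<^sup>n\<close> as a real inner product space, \<open>z \<bullet> w = Re (z\<^sup>* w)\<close>. As \<open>K = iH\<close> is
  skew-adjoint, \<open>A = s\<^sub>0 + K\<close> satisfies \<open>z \<bullet> Az = s\<^sub>0 |z|\<^sup>2\<close>, and putting \<open>z = A\<^sup>-\<^sup>1 u\<close> gives
  \<open>u \<bullet> A\<^sup>-\<^sup>1 u = s\<^sub>0 |A\<^sup>-\<^sup>1 u|\<^sup>2\<close>. Compressing by the co-isometry \<open>R\<close> keeps this form positive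
  definite, so \<open>Y = R A\<^sup>-\<^sup>1 R\<^sup>*\<close> is invertible, and since \<open>R\<close> is a contraction it gives
  \<open>w \<bullet> Yw \<ge> s\<^sub>0 |Yw|\<^sup>2\<close>. For \<open>x = Yw\<close> this reads \<open>x \<bullet> Y\<^sup>-\<^sup>1 x \<ge> s\<^sub>0 |x|\<^sup>2\<close>, which for real \<open>x\<close>
  says \<open>Re (Y\<^sup>-\<^sup>1 - s\<^sub>0) \<ge> 0\<close>. Complex symmetry passes from \<open>A\<close> to \<open>A\<^sup>-\<^sup>1\<close>, \<open>Y\<close> and \<open>Y\<^sup>-\<^sup>1\<close>.
\<close>

lemma matrix_inv_right: "invertible A \<Longrightarrow> A ** matrix_inv A = mat 1"
  unfolding invertible_def matrix_inv_def by (metis (mono_tags, lifting) someI_ex)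

lemma transpose_matrix_inv_symmetric:
  fixes A :: "'a::comm_semiring_1^'n^'n"
  assumes "invertible A" and "transpose A = A"
  shows "transpose (matrix_inv A) = matrix_inv A"
proof -
  have "transpose (matrix_inv A) = transpose (matrix_inv A) ** (A ** matrix_inv A)"
    by (simp add: matrix_inv_right[OF assms(1)])
  also have "\<dots> = transpose (A ** matrix_inv A) ** matrix_inv A"
    by (metis assms(2) matrix_mul_assoc matrix_transpose_mul)
  finally show ?thesis
    by (simp add: matrix_inv_right[OF assms(1)])
qed

lemma invertible_if_inner_pos:
  fixes A :: "'a::{field,real_inner}^'n^'n"
  assumes "\<And>z. z \<noteq> 0 \<Longrightarrow> z \<bullet> (A *v z) > 0"
  shows "invertible A"
  unfolding invertible_left_inverse matrix_left_invertible_ker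
  using assms by force

lemma matrix_vector_mult_uminus: "(- A) *v x = - (A *v x :: 'a::ring_1^'m)"
  by (simp add: vec_eq_iff matrix_vector_mult_def sum_negf)

lemma transpose_map_matrix: "transpose (map_matrix f M) = map_matrix f (transpose M)"
  by (simp add: vec_eq_iff transpose_def)

lemma transpose_diff: "transpose (A - B) = transpose A - transpose (B :: 'a::ab_group_add^'n^'m)"
  by (simp add: vec_eq_iff transpose_def)

lemma map_matrix_of_real_mult:
  "map_matrix of_real (M ** N) = map_matrix of_real M ** (map_matrix of_real N :: 'a::real_algebra_1^_^_)"
  by (simp add: vec_eq_iff matrix_matrix_mult_def)

lemma mat_of_real_mult: "mat (of_real c) *v z = c *\<^sub>R (z::complex^'n)"
proof -
  have "(\<Sum>j\<in>UNIV. mat (of_real c) $ i $ j * z $ j) = c *\<^sub>R z $ i" for i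
  proof -
    have "(\<Sum>j\<in>UNIV. mat (of_real c) $ i $ j * z $ j) = (\<Sum>j\<in>UNIV. if i = j then of_real c * z $ j else 0)"
      by (rule sum.cong) (auto simp: mat_def)
    then show ?thesis
      by (simp add: scaleR_conv_of_real)
  qed
  then show ?thesis
    by (simp add: vec_eq_iff matrix_vector_mult_def)
qed

definition mat_adjoint :: "complex^'n^'m \<Rightarrow> complex^'m^'n" where
  "mat_adjoint M = map_matrix cnj (transpose M)"

lemma inner_vec_complex: "(v::complex^'n) \<bullet> w = Re (\<Sum>i\<in>UNIV. cnj (v$i) * w$i)"
  by (simp add: inner_vec_def inner_complex_def)

lemma inner_mat_adjoint: "(M *v v) \<bullet> w = v \<bullet> (mat_adjoint M *v w)"
proof -
  have "(\<Sum>i\<in>UNIV. cnj (\<Sum>j\<in>UNIV. M$i$j * v$j) * w$i)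
      = (\<Sum>i\<in>UNIV. \<Sum>j\<in>UNIV. cnj (v$j) * (cnj (M$i$j) * w$i))"
    by (simp add: sum_distrib_left sum_distrib_right mult_ac)
  also have "\<dots> = (\<Sum>j\<in>UNIV. \<Sum>i\<in>UNIV. cnj (v$j) * (cnj (M$i$j) * w$i))"
    by (rule sum.swap)
  also have "\<dots> = (\<Sum>j\<in>UNIV. cnj (v$j) * (\<Sum>i\<in>UNIV. cnj (M$i$j) * w$i))"
    by (simp add: sum_distrib_left)
  finally show ?thesis
    by (simp add: inner_vec_complex matrix_vector_mult_def mat_adjoint_def transpose_def)
qed

lemma inner_mat_adjoint_right: "v \<bullet> (M *v w) = (mat_adjoint M *v v) \<bullet> w"
  by (metis inner_commute inner_mat_adjoint)

lemma mat_adjoint_of_real: "mat_adjoint (map_matrix of_real M) = map_matrix of_real (transpose M)"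
  by (simp add: mat_adjoint_def vec_eq_iff transpose_def)

lemma norm_mat_adjoint_coisometry:
  assumes "M ** mat_adjoint M = mat 1"
  shows "norm (mat_adjoint M *v w) = norm w"
proof -
  have "(mat_adjoint M *v w) \<bullet> (mat_adjoint M *v w) = w \<bullet> w"
    by (simp add: inner_mat_adjoint_right[symmetric] matrix_vector_mul_assoc assms)
  then show ?thesis
    by (simp add: norm_eq_sqrt_inner)
qed

lemma norm_coisometry_le:
  assumes "M ** mat_adjoint M = mat 1"
  shows "norm (M *v z) \<le> norm z"
proof -
  have "norm (M *v z) ^ 2 = z \<bullet> (mat_adjoint M *v (M *v z))"
    by (simp add: power2_norm_eq_inner inner_mat_adjoint)
  also have "\<dots> \<le> norm z * norm (M *v z)"
    using norm_cauchy_schwarz[of z] norm_mat_adjoint_coisometry[OF assms] by metis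
  finally have "norm (M *v z) * norm (M *v z) \<le> norm z * norm (M *v z)"
    by (simp add: power2_eq_square)
  then show ?thesis
    by (cases "M *v z = 0") auto
qed

lemma inner_compression:
  "w \<bullet> ((M ** B ** mat_adjoint M) *v w) = (mat_adjoint M *v w) \<bullet> (B *v (mat_adjoint M *v w))"
  by (simp add: matrix_vector_mul_assoc[symmetric] inner_mat_adjoint_right)

lemma inner_skew_adjoint_self:
  assumes "mat_adjoint K = - K"
  shows "z \<bullet> (K *v z) = 0"
proof -
  have "z \<bullet> (K *v z) = z \<bullet> (mat_adjoint K *v z)"
    by (metis inner_commute inner_mat_adjoint)
  also have "\<dots> = - (z \<bullet> (K *v z))"
    using assms matrix_vector_mult_uminus[of K z] by simp
  finally show ?thesis by simp
qed

lemma inner_shifted_skew: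
  assumes "mat_adjoint K = - K"
  shows "z \<bullet> ((mat (of_real c) + K) *v z) = c * (z \<bullet> z)"
  by (simp add: matrix_vector_mult_add_rdistrib mat_of_real_mult inner_add_right
      inner_skew_adjoint_self[OF assms])

text \<open>With \<open>M = R\<close> and \<open>K = iH\<close> this is \<open>Y\<^sup>~(s) = R (s + iH)\<^sup>-\<^sup>1 R\<^sup>T\<close>.\<close>
definition compressed_resolvent :: "complex^'n^'m \<Rightarrow> complex^'n^'n \<Rightarrow> real \<Rightarrow> complex^'m^'m" where
  "compressed_resolvent M K s = M ** matrix_inv (mat (of_real s) + K) ** mat_adjoint M"

context
  fixes K :: "complex^'n^'n" and s :: real
  assumes skew: "mat_adjoint K = - K" and pos: "0 < s"
begin

lemma invertible_shifted_skew: "invertible (mat (of_real s) + K)"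
  by (rule invertible_if_inner_pos) (simp add: inner_shifted_skew[OF skew] pos)

lemma inner_resolvent_shifted_skew:
  "u \<bullet> (matrix_inv (mat (of_real s) + K) *v u) = s * norm (matrix_inv (mat (of_real s) + K) *v u) ^ 2"
proof -
  define A where "A = mat (of_real s) + K"
  define z where "z = matrix_inv A *v u"
  have "u = A *v z"
    using invertible_shifted_skew
    by (simp add: z_def A_def matrix_vector_mul_assoc matrix_inv_right)
  then have "u \<bullet> z = z \<bullet> (A *v z)"
    by (simp add: inner_commute)
  then show ?thesis
    by (simp add: A_def z_def inner_shifted_skew[OF skew] power2_norm_eq_inner)
qed

context
  fixes M :: "complex^'n^'m"
  assumes coiso: "M ** mat_adjoint M = mat 1"
begin

lemma inner_compressed_resolvent:
  "w \<bullet> (compressed_resolvent M K s *v w)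
     = s * norm (matrix_inv (mat (of_real s) + K) *v (mat_adjoint M *v w)) ^ 2"
  by (simp add: compressed_resolvent_def inner_compression inner_resolvent_shifted_skew)

lemma invertible_compressed_resolvent: "invertible (compressed_resolvent M K s)"
proof (rule invertible_if_inner_pos)
  fix w :: "complex^'m"
  assume "w \<noteq> 0"
  then have "mat_adjoint M *v w \<noteq> 0"
    using norm_mat_adjoint_coisometry[OF coiso, of w] by auto
  moreover have "u = 0" if "matrix_inv (mat (of_real s) + K) *v u = 0" for u
    using invertible_shifted_skew arg_cong[OF that, of "(*v) (mat (of_real s) + K)"]
    by (simp add: matrix_vector_mul_assoc matrix_inv_right)
  ultimately have "matrix_inv (mat (of_real s) + K) *v (mat_adjoint M *v w) \<noteq> 0"
    by blast
  then show "0 < w \<bullet> (compressed_resolvent M K s *v w)"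
    by (simp add: inner_compressed_resolvent pos)
qed

lemma compressed_resolvent_cocoercive:
  "s * norm (compressed_resolvent M K s *v w) ^ 2 \<le> w \<bullet> (compressed_resolvent M K s *v w)"
proof -
  let ?z = "matrix_inv (mat (of_real s) + K) *v (mat_adjoint M *v w)"
  have "compressed_resolvent M K s *v w = M *v ?z"
    by (simp add: compressed_resolvent_def matrix_vector_mul_assoc matrix_mul_assoc)
  then have "norm (compressed_resolvent M K s *v w) \<le> norm ?z"
    using norm_coisometry_le[OF coiso] by simp
  then show ?thesis
    using pos by (simp add: inner_compressed_resolvent power_mono)
qed

lemma inner_inverse_compressed_resolvent_ge:
  "s * norm x ^ 2 \<le> x \<bullet> (matrix_inv (compressed_resolvent M K s) *v x)"
proof -
  define Y where "Y = compressed_resolvent M K s"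
  define w where "w = matrix_inv Y *v x"
  have "Y *v w = x"
    using invertible_compressed_resolvent
    by (simp add: Y_def w_def matrix_vector_mul_assoc matrix_inv_right)
  then show ?thesis
    using compressed_resolvent_cocoercive[of w] by (simp add: Y_def w_def inner_commute)
qed

end

end

lemma inner_map_matrix_Re:
  fixes M :: "complex^'n^'n" and x :: "real^'n"
  shows "x \<bullet> (map_matrix Re M *v x) = (\<chi> i. of_real (x$i)) \<bullet> (M *v (\<chi> i. of_real (x$i)))"
  by (simp add: inner_vec_def matrix_vector_mult_def inner_complex_def sum_distrib_left mult_ac)

lemma neg_semidef_Re_shift:
  fixes B :: "complex^'n^'n"
  assumes "\<And>z. s * norm z ^ 2 \<le> z \<bullet> (B *v z)"
  shows "neg_semidef (- map_matrix Re (B - mat (of_real s)))"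
  unfolding neg_semidef_def
proof
  fix x :: "real^'n"
  define z where "z = (\<chi> i. complex_of_real (x$i))"
  have "x \<bullet> (- map_matrix Re (B - mat (of_real s)) *v x) = s * norm z ^ 2 - z \<bullet> (B *v z)"
    by (simp add: matrix_vector_mult_uminus inner_map_matrix_Re z_def[symmetric]
        matrix_vector_mult_diff_rdistrib mat_of_real_mult inner_diff_right power2_norm_eq_inner)
  then show "x \<bullet> (- map_matrix Re (B - mat (of_real s)) *v x) \<le> 0"
    using assms[of z] by simp
qed

theorem mainTheorem1:
  fixes H :: "real^'n^'n" and R :: "real^'n^'g" and s0 :: real
  assumes "CARD('g) \<le> CARD('n)"
    and "transpose H = H"
    and "R ** transpose R = mat 1"
    and "s0 > 0"
  defines "Rc \<equiv> map_matrix complex_of_real R"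
    and "A \<equiv> mat (complex_of_real s0) + map_matrix (\<lambda>x. \<i> * complex_of_real x) H"
  defines "Y \<equiv> Rc ** matrix_inv A ** transpose Rc"
  defines "Hbar \<equiv> map_matrix (\<lambda>z. - \<i> * z) (matrix_inv Y - mat (complex_of_real s0))"
  shows "invertible A \<and> invertible Y \<and> transpose Hbar = Hbar
         \<and> neg_semidef (map_matrix Im Hbar)
         \<and> map_matrix Im Hbar = - map_matrix Re (matrix_inv Y - mat (complex_of_real s0))"
proof -
  \<comment> \<open>\<open>CARD('g) \<le> CARD('n)\<close> is implied by \<open>R R\<^sup>T = 1\<close> and not needed.\<close>
  define K where "K = map_matrix (\<lambda>x. \<i> * complex_of_real x) H"
  have H_sym: "H$j$i = H$i$j" for i j
    using arg_cong[OF assms(2), of "\<lambda>M. M$i$j"] by (simp add: transpose_def)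
  have skew: "mat_adjoint K = - K"
    by (simp add: K_def mat_adjoint_def vec_eq_iff transpose_def H_sym)
  have Rc_adjoint: "mat_adjoint Rc = transpose Rc"
    by (simp add: Rc_def mat_adjoint_of_real transpose_map_matrix)
  have coiso: "Rc ** mat_adjoint Rc = mat 1"
    unfolding Rc_def mat_adjoint_of_real map_matrix_of_real_mult[symmetric] assms(3)
    by (simp add: vec_eq_iff mat_def)
  have Y_eq: "Y = compressed_resolvent Rc K s0"
    by (simp add: Y_def A_def K_def compressed_resolvent_def Rc_adjoint)
  have invA: "invertible A"
    using invertible_shifted_skew[OF skew assms(4)] by (simp add: A_def K_def)
  have invY: "invertible Y"
    using invertible_compressed_resolvent[OF skew assms(4) coiso] by (simp add: Y_eq)
  have "transpose A = A"
    by (simp add: A_def vec_eq_iff transpose_def mat_def H_sym)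
  then have "transpose Y = Y"
    by (simp add: Y_def matrix_transpose_mul matrix_mul_assoc transpose_matrix_inv_symmetric[OF invA])
  then have "transpose Hbar = Hbar"
    by (simp add: Hbar_def transpose_map_matrix transpose_diff transpose_matrix_inv_symmetric[OF invY])
  moreover have Im_Hbar: "map_matrix Im Hbar = - map_matrix Re (matrix_inv Y - mat (complex_of_real s0))"
    by (simp add: Hbar_def vec_eq_iff)
  moreover have "neg_semidef (map_matrix Im Hbar)"
    unfolding Im_Hbar Y_eq
    by (rule neg_semidef_Re_shift[OF inner_inverse_compressed_resolvent_ge[OF skew assms(4) coiso]])
  ultimately show ?thesis
    using invA invY by blast
qed

end
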